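(* Let $\alpha\in(0,1)$. Assume the setting described in the context, and assume there exist $\varepsilon_{\mathrm{test}}\in(0,1)$, $\{\varepsilon_{\mathrm{test}}(i)\}_{i\in I_{\mathrm{test}}}\subset(0,1)$ and $\delta_{\mathrm{test}}\in(0,1)$ such that for every measurable $q:(\mathcal{X}\times\mathcal{Y})^{n_{\mathrm{train}}}\to\mathbb{R}$ and every $i\in I_{\mathrm{test}}$, \[\left|\mathbb{P}[\widehat{s}_{\mathrm{train}}(X_i,Y_i)\le q_{\mathrm{train}}]-\mathbb{E}[P_{q,\mathrm{train}}]\right|\le\varepsilon_{\mathrm{test}}(i),\] and moreover \[\mathbb{P}\left[\left|\frac{1}{n_{\mathrm{test}}}\sum_{i\in I_{\mathrm{test}}}\mathbf{1}\{\widehat{s}_{\mathrm{train}}(X_i,Y_i)\le q_{\mathrm{train}}\}-P_{q,\mathrm{train}}\right|\le\varepsilon_{\mathrm{test}}\right]\ge 1-\delta_{\mathrm{test}}.\] Then for all $i\in I_{\mathrm{test}}$, \[\mathbb{P}\left[\widehat{s}_{\mathrm{train}}(X_i,Y_i)\le\widehat{q}^{(i)}_{1-\alpha,\mathrm{cal}}\right]\ge 1-\alpha-\varepsilon_{\mathrm{test}}(i)-\varepsilon_{\mathrm{test}}-\delta_{\mathrm{test}}-\frac{1}{n_{\mathrm{test}}}.\] Moreover, \[\mathbb{P}\left[\frac{1}{n_{\mathrm{test}}}\sum_{i\in I_{\mathrm{test}}}\mathbf{1}\{\widehat{s}_{\mathrm{train}}(X_i,Y_i)\le\widehat{q}^{(i)}_{1-\alpha,\mathrm{cal}}\}\ge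 1-\alpha-\varepsilon_{\mathrm{test}}-\frac{1}{n_{\mathrm{test}}}\right]\ge 1-2\delta_{\mathrm{test}}.\]
   Context: (Rank-one-out conformal prediction.) Let $\mathcal{X},\mathcal{Y}$ be measurable spaces. The sample $(X_i,Y_i)_{i=1}^n$ consists of random pairs in $\mathcal{X}\times\mathcal{Y}$, and $(X_*,Y_* )$ is an additional random pair, independent of the sample, with $(X_i,Y_i)\sim(X_*,Y_* )$ for all $i$. Write $n=n_{\mathrm{train}}+n_{\mathrm{test}}$ with positive integers, $n_{\mathrm{test}}\ge2$, $I_{\mathrm{train}}=\{1,\dots,n_{\mathrm{train}}\}$, $I_{\mathrm{test}}=\{n_{\mathrm{train}}+1,\dots,n\}$. Let $s:(\mathcal{X}\times\mathcal{Y})^{n_{\mathrm{train}}+1}\to\mathbb{R}$ be any (measurable) function and $\widehat{s}_{\mathrm{train}}(x,y)=s((X_i,Y_i)_{i\in I_{\mathrm{train}}},(x,y))$. For $i\in I_{\mathrm{test}}$ and $\phi\in[0,1)$, $\widehat{q}^{(i)}_{\phi,\mathrm{cal}}=\inf\{t\in\mathbb{R}:\frac{1}{n_{\mathrm{test}}-1}\sum_{j\in I_{\mathrm{test}}\setminus\{i\}}\mathbf{1}\{\widehat{s}_{\mathrm{train}}(X_j,Y_j)\le t\}\ge\phi\}$. For measurable $q:(\mathcal{X}\times\mathcal{Y})^{n_{\mathrm{train}}}\to\mathbb{R}$, $q_{\mathrm{train}}=q((X_i,Y_i)_{i\in I_{\mathrm{train}}})$ and $P_{q,\mathrm{train}}=\mathbb{P}[\widehat{s}_{\mathrm{train}}(X_*,Y_*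 )\le q_{\mathrm{train}}\mid (X_i,Y_i)_{i\in I_{\mathrm{train}}}]$. *)

theory Defs
  imports "HOL-Probability.Probability"
begin

definition train_data ::
  "(nat \<Rightarrow> 'a \<Rightarrow> 'x) \<Rightarrow> (nat \<Rightarrow> 'a \<Rightarrow> 'y) \<Rightarrow> nat \<Rightarrow> 'a \<Rightarrow> (nat \<Rightarrow> 'x \<times> 'y)" where
  "train_data X Y ntrain \<omega> = (\<lambda>i\<in>{1..ntrain}. (X i \<omega>, Y i \<omega>))"

definition cal_quantile ::
  "('z \<Rightarrow> real) \<Rightarrow> nat set \<Rightarrow> nat \<Rightarrow> (nat \<Rightarrow> 'z) \<Rightarrow> real \<Rightarrow> real" where
  "cal_quantile shat Itest i Z \<phi> =
     Inf {t::real. (\<Sum>j\<in>Itest - {i}. (of_bool (shat (Z j) \<le> t) :: real)) / (real (card Itest) - 1) \<ge> \<phi>}"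

definition P_q_train ::
  "'a measure \<Rightarrow> 'x measure \<Rightarrow> 'y measure \<Rightarrow> (nat \<Rightarrow> 'a \<Rightarrow> 'x) \<Rightarrow> (nat \<Rightarrow> 'a \<Rightarrow> 'y) \<Rightarrow>
   ('a \<Rightarrow> 'x) \<Rightarrow> ('a \<Rightarrow> 'y) \<Rightarrow> nat \<Rightarrow>
   ((nat \<Rightarrow> 'x \<times> 'y) \<Rightarrow> 'x \<times> 'y \<Rightarrow> real) \<Rightarrow> ((nat \<Rightarrow> 'x \<times> 'y) \<Rightarrow> real) \<Rightarrow> 'a \<Rightarrow> real" where
  "P_q_train M MX MY X Y Xs Ys ntrain s q =
     real_cond_exp M
       (vimage_algebra (space M) (train_data X Y ntrain) (PiM {1..ntrain} (\<lambda>_. MX \<Otimes>\<^sub>M MY)))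
       (indicator {\<omega> \<in> space M. s (train_data X Y ntrain \<omega>) (Xs \<omega>, Ys \<omega>) \<le> q (train_data X Y ntrain \<omega>)})"

end

(* Given the training data D, the test point is independent of D, so P_{q,train} is the
   distribution function F_D of the frozen score s(D, -) evaluated at q(D). Let q be the
   L-quantile of F_D, where L = 1 - alpha - eps - 1/n_test. By the first hypothesis the score of
   test point i lies below q with probability at least L - eps(i). Applying the second hypothesis
   to q - 1/N and letting N tend to infinity shows that, outside an event of probability delta,
   fewer than (1 - alpha)(n_test - 1) test scores lie strictly below q, because F_D stays below L
   to the left of q. On the remaining event fewer than (1 - alpha)(n_test - 1) of the other scores
   lie strictly below the score of point i, which is exactly coverage by the leave-one-out
   quantile. The second claim holds surely: at least (1 - alpha)(n_test - 1) of the n_test points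
   have fewer than that many scores strictly below them. *)

theory Submission
  imports Defs
begin

section \<open>Leave-one-out empirical quantiles\<close>

lemma card_strictly_below_less_iff:
  fixes a :: "nat \<Rightarrow> real" and c :: real
  assumes J: "finite J"
  shows "card {j\<in>J. a j < x} < c \<longleftrightarrow> (\<forall>t<x. card {j\<in>J. a j \<le> t} < c)"
proof
  assume "card {j\<in>J. a j < x} < c"
  moreover have "card {j\<in>J. a j \<le> t} \<le> card {j\<in>J. a j < x}" if "t < x" for t
    using J that by (intro card_mono) auto
  ultimately show "\<forall>t<x. card {j\<in>J. a j \<le> t} < c"
    by (meson le_less_trans of_nat_le_iff)
next
  assume below: "\<forall>t<x. card {j\<in>J. a j \<le> t} < c"
  \<comment> \<open>\<open>x - 1\<close> only keeps the maximum defined when no \<open>a j\<close> lies below \<open>x\<close>\<close>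
  define t0 where "t0 = Max (insert (x - 1) (a ` {j\<in>J. a j < x}))"
  have "t0 < x" using J by (simp add: t0_def)
  moreover have "{j\<in>J. a j < x} \<subseteq> {j\<in>J. a j \<le> t0}"
    using J by (auto simp: t0_def)
  then have "card {j\<in>J. a j < x} \<le> card {j\<in>J. a j \<le> t0}"
    using J by (intro card_mono) auto
  ultimately show "card {j\<in>J. a j < x} < c"
    using below by (meson le_less_trans of_nat_le_iff)
qed

lemma le_Inf_empirical_quantile_iff:
  fixes a :: "nat \<Rightarrow> real"
  assumes J: "finite J" and K: "K > 0" and \<phi>: "0 < \<phi>" "\<phi> * K \<le> real (card J)"
  shows "x \<le> Inf {t. \<phi> \<le> (\<Sum>j\<in>J. of_bool (a j \<le> t)) / K}
     \<longleftrightarrow> (\<Sum>j\<in>J. of_bool (a j < x)) < \<phi> * K"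
proof -
  define T where "T = {t. \<phi> \<le> (\<Sum>j\<in>J. of_bool (a j \<le> t)) / K}"
  have T_iff: "t \<in> T \<longleftrightarrow> \<phi> * K \<le> card {j\<in>J. a j \<le> t}" for t
    using K J by (simp add: T_def pos_le_divide_eq Int_def)
  have "{j\<in>J. a j \<le> Max (a ` J)} = J"
    using J by auto
  then have "Max (a ` J) \<in> T"
    using \<phi> by (simp add: T_iff)
  then have T_ne: "T \<noteq> {}" by blast
  have T_bdd: "bdd_below T"
  proof (rule bdd_belowI)
    fix t assume "t \<in> T"
    moreover have "0 < \<phi> * K" using \<phi> K by simp
    ultimately have "card {j\<in>J. a j \<le> t} > 0"
      using T_iff by (metis of_nat_0_less_iff order_less_le_trans)
    then obtain j where "j \<in> J" "a j \<le> t"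
      by (auto simp: card_gt_0_iff)
    then show "Min (a ` J) \<le> t" using J by (meson Min_le finite_imageI image_eqI order_trans)
  qed
  have "x \<le> Inf T \<longleftrightarrow> (\<forall>t<x. t \<notin> T)"
    using T_ne T_bdd by (simp add: le_cInf_iff) (meson not_le)
  also have "\<dots> \<longleftrightarrow> card {j\<in>J. a j < x} < \<phi> * K"
    using card_strictly_below_less_iff[OF J] by (simp add: T_iff not_le)
  finally show ?thesis using J by (simp add: T_def Int_def)
qed

lemma count_rank_less_ge:
  fixes a :: "nat \<Rightarrow> real"
  assumes J: "finite J" and c: "c < real (card J)"
  shows "c \<le> (\<Sum>i\<in>J. of_bool ((\<Sum>j\<in>J - {i}. of_bool (a j < a i)) < c))"
proof (rule ccontr)
  define B where "B = {i\<in>J. (\<Sum>j\<in>J - {i}. of_bool (a j < a i)) < c}"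
  assume "\<not> ?thesis"
  then have B_lt: "real (card B) < c" using J by (simp add: B_def Int_def)
  have "J - B \<noteq> {}"
  proof
    assume "J - B = {}"
    then have "card J \<le> card B"
      using J by (intro card_mono) (auto simp: B_def)
    then show False using B_lt c by linarith
  qed
  then have "Min (a ` (J - B)) \<in> a ` (J - B)"
    using J by (intro Min_in) auto
  then obtain i0 where i0: "i0 \<in> J - B" "a i0 = Min (a ` (J - B))"
    by auto
  \<comment> \<open>everything strictly below a minimum of \<open>J - B\<close> lies in \<open>B\<close>, hence so does the minimum\<close>
  have "a i0 \<le> a j" if "j \<in> J - B" for j
    using i0(2) J that by simp
  then have "{j\<in>J - {i0}. a j < a i0} \<subseteq> B"
    by (force simp: not_less[symmetric])
  then have "(\<Sum>j\<in>J - {i0}. of_bool (a j < a i0)) \<le> real (card B)"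
    using J by (simp add: Int_def card_mono B_def)
  then have "i0 \<in> B" using B_lt i0 by (simp add: B_def)
  then show False using i0 by simp
qed

lemma le_cal_quantile_iff:
  assumes I: "finite I" "i \<in> I" "2 \<le> card I" and \<phi>: "0 < \<phi>" "\<phi> \<le> 1"
  shows "f (Z i) \<le> cal_quantile f I i Z \<phi>
    \<longleftrightarrow> (\<Sum>j\<in>I - {i}. of_bool (f (Z j) < f (Z i))) < \<phi> * (real (card I) - 1)"
proof -
  have card_diff: "real (card (I - {i})) = real (card I) - 1"
    using I by (simp add: of_nat_diff)
  have "\<phi> * (real (card I) - 1) \<le> real (card (I - {i}))"
    using \<phi> I by (simp add: card_diff mult_left_le_one_le)
  then show ?thesis
    unfolding cal_quantile_def
    using le_Inf_empirical_quantile_iff[where J="I - {i}" and K="real (card I) - 1" and a="\<lambda>j. f (Z j)" and x="f (Z i)"] I \<phi>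
    by simp
qed

lemma cal_quantile_empirical_coverage:
  assumes I: "finite I" "2 \<le> card I" and \<alpha>: "0 \<le> \<alpha>" "\<alpha> < 1"
  shows "1 - \<alpha> - 1 / card I \<le> (\<Sum>i\<in>I. of_bool (f (Z i) \<le> cal_quantile f I i Z (1 - \<alpha>))) / card I"
proof -
  have "(1 - \<alpha>) * (real (card I) - 1) \<le> real (card I) - 1"
    using \<alpha> I by (intro mult_left_le_one_le) auto
  then have "(1 - \<alpha>) * (real (card I) - 1)
      \<le> (\<Sum>i\<in>I. of_bool ((\<Sum>j\<in>I - {i}. of_bool (f (Z j) < f (Z i))) < (1 - \<alpha>) * (real (card I) - 1)))"
    using I by (intro count_rank_less_ge) linarith+
  also have "\<dots> = (\<Sum>i\<in>I. of_bool (f (Z i) \<le> cal_quantile f I i Z (1 - \<alpha>)))"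
    using le_cal_quantile_iff[OF I(1) _ I(2), where \<phi>="1 - \<alpha>"] \<alpha> by (intro sum.cong) auto
  finally have "(1 - \<alpha>) * (real (card I) - 1) / card I
      \<le> (\<Sum>i\<in>I. of_bool (f (Z i) \<le> cal_quantile f I i Z (1 - \<alpha>))) / card I"
    by (simp add: divide_right_mono)
  moreover have "1 - \<alpha> - 1 / card I \<le> (1 - \<alpha>) * (real (card I) - 1) / card I"
  proof -
    have "real (card I) \<noteq> 0" using I by linarith
    then have "(1 - \<alpha>) * (real (card I) - 1) / card I = 1 - \<alpha> - (1 - \<alpha>) / card I"
      by (simp add: field_simps)
    moreover have "(1 - \<alpha>) / card I \<le> 1 / card I"
      using \<alpha> by (simp add: divide_right_mono)
    ultimately show ?thesis by linarith
  qed
  ultimately show ?thesis by linarith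
qed

section \<open>Quantiles of distribution functions\<close>

definition cdf_quantile :: "real measure \<Rightarrow> real \<Rightarrow> real" where
  "cdf_quantile M p = Inf {t. p \<le> cdf M t}"

lemma (in real_distribution) cdf_quantile_le_iff:
  assumes p: "0 < p" "p < 1"
  shows "cdf_quantile M p \<le> t \<longleftrightarrow> p \<le> cdf M t"
proof -
  define T where "T = {t. p \<le> cdf M t}"
  have up: "u \<in> T" if "t \<in> T" "t \<le> u" for t u
    using that cdf_nondecreasing[of t u] by (simp add: T_def)
  obtain b where b: "cdf M b < p"
    using order_tendstoD(2)[OF cdf_lim_at_bot p(1)] by (auto simp: eventually_at_bot_linorder)
  obtain t0 where "p < cdf M t0"
    using order_tendstoD(1)[OF cdf_lim_at_top_prob p(2)] by (auto simp: eventually_at_top_linorder)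
  then have T_ne: "T \<noteq> {}" by (auto simp: T_def intro: less_imp_le)
  have T_bdd: "bdd_below T"
  proof (rule bdd_belowI)
    fix t assume "t \<in> T"
    show "b \<le> t"
    proof (rule ccontr)
      assume "\<not> b \<le> t"
      then have "cdf M t \<le> cdf M b" by (intro cdf_nondecreasing) simp
      with b \<open>t \<in> T\<close> show False by (simp add: T_def)
    qed
  qed
  have "p \<le> cdf M (Inf T)"
  proof (rule tendsto_lowerbound)
    show "(cdf M \<longlongrightarrow> cdf M (Inf T)) (at_right (Inf T))"
      using cdf_is_right_cont by (simp add: continuous_within)
    have "p \<le> cdf M t" if "Inf T < t" for t
    proof -
      obtain u where "u \<in> T" "u < t"
        using cInf_lessD[OF T_ne \<open>Inf T < t\<close>] by blast
      then show ?thesis using up[of u t] by (simp add: T_def)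
    qed
    with eventually_at_right_less show "\<forall>\<^sub>F t in at_right (Inf T). p \<le> cdf M t"
      by (rule eventually_mono)
  qed simp
  then have "Inf T \<in> T" by (simp add: T_def)
  then have "Inf T \<le> t \<longleftrightarrow> t \<in> T"
    using up cInf_lower[OF _ T_bdd] by blast
  then show ?thesis by (simp add: cdf_quantile_def T_def)
qed

lemma borel_measurable_cdf_quantile:
  assumes \<mu>: "\<And>d. d \<in> space N \<Longrightarrow> real_distribution (\<mu> d)"
    and cdf: "\<And>t. (\<lambda>d. cdf (\<mu> d) t) \<in> borel_measurable N"
    and p: "0 < p" "p < 1"
  shows "(\<lambda>d. cdf_quantile (\<mu> d) p) \<in> borel_measurable N"
proof (rule borel_measurable_iff_le[THEN iffD2], intro allI)
  fix a
  have "{d \<in> space N. cdf_quantile (\<mu> d) p \<le> a} = {d \<in> space N. p \<le> cdf (\<mu> d) a}"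
    using real_distribution.cdf_quantile_le_iff[OF \<mu> p] by blast
  also have "\<dots> \<in> sets N"
    using cdf[of a] by measurable
  finally show "{d \<in> space N. cdf_quantile (\<mu> d) p \<le> a} \<in> sets N" .
qed

section \<open>Counting scores below a threshold\<close>

lemma
  fixes S :: "nat \<Rightarrow> 'a \<Rightarrow> real"
  assumes "\<And>j. j \<in> J \<Longrightarrow> S j \<in> borel_measurable M" and [measurable]: "h \<in> borel_measurable M"
  shows borel_measurable_count_le: "(\<lambda>\<omega>. \<Sum>j\<in>J. of_bool (S j \<omega> \<le> h \<omega>) :: real) \<in> borel_measurable M"
    and borel_measurable_count_less: "(\<lambda>\<omega>. \<Sum>j\<in>J. of_bool (S j \<omega> < h \<omega>) :: real) \<in> borel_measurable M"
  by (intro borel_measurable_sum; use assms in measurable)+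

lemma eventually_count_less_le:
  fixes x :: "nat \<Rightarrow> real"
  assumes J: "finite J"
  shows "\<forall>\<^sub>F N in sequentially. (\<Sum>j\<in>J. of_bool (x j < y)) \<le> (\<Sum>j\<in>J. of_bool (x j \<le> y - 1 / Suc N) :: real)"
proof -
  have "\<forall>\<^sub>F N in sequentially. \<forall>j\<in>J. x j < y \<longrightarrow> x j \<le> y - 1 / Suc N"
  proof (rule eventually_ball_finite[OF J], intro ballI)
    fix j
    show "\<forall>\<^sub>F N in sequentially. x j < y \<longrightarrow> x j \<le> y - 1 / Suc N"
    proof (cases "x j < y")
      case True
      then have "0 < y - x j" by simp
      from order_tendstoD(2)[OF LIMSEQ_inverse_real_of_nat this]
      show ?thesis by eventually_elim (auto simp: inverse_eq_divide)
    qed simp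
  qed
  then show ?thesis
    by eventually_elim (intro sum_mono, auto)
qed

lemma (in finite_measure) measure_count_less_le:
  fixes S :: "nat \<Rightarrow> 'a \<Rightarrow> real" and c :: real
  assumes J: "finite J" and S: "\<And>j. j \<in> J \<Longrightarrow> S j \<in> borel_measurable M"
    and h[measurable]: "h \<in> borel_measurable M"
    and bound: "\<And>N. measure M {\<omega> \<in> space M. c \<le> (\<Sum>j\<in>J. of_bool (S j \<omega> \<le> h \<omega> - 1 / Suc N))} \<le> \<delta>"
  shows "measure M {\<omega> \<in> space M. c \<le> (\<Sum>j\<in>J. of_bool (S j \<omega> < h \<omega>))} \<le> \<delta>"
proof -
  define G where "G N = {\<omega> \<in> space M. c \<le> (\<Sum>j\<in>J. of_bool (S j \<omega> \<le> h \<omega> - 1 / Suc N))}" for N :: nat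
  have "G N \<in> sets M" for N
  proof -
    have [measurable]: "(\<lambda>\<omega>. \<Sum>j\<in>J. of_bool (S j \<omega> \<le> h \<omega> - 1 / Suc N) :: real) \<in> borel_measurable M"
      using S by (rule borel_measurable_count_le) measurable
    show ?thesis unfolding G_def by measurable
  qed
  then have G_sets: "range G \<subseteq> sets M" by auto
  have "incseq G"
  proof (intro monoI subsetI)
    fix N N' :: nat and \<omega> assume "N \<le> N'" and "\<omega> \<in> G N"
    then have "1 / real (Suc N') \<le> 1 / real (Suc N)" by (simp add: frac_le)
    then have "(\<Sum>j\<in>J. of_bool (S j \<omega> \<le> h \<omega> - 1 / Suc N) :: real)
        \<le> (\<Sum>j\<in>J. of_bool (S j \<omega> \<le> h \<omega> - 1 / Suc N'))"
      by (intro sum_mono) auto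
    with \<open>\<omega> \<in> G N\<close> show "\<omega> \<in> G N'" by (auto simp: G_def)
  qed
  have "{\<omega> \<in> space M. c \<le> (\<Sum>j\<in>J. of_bool (S j \<omega> < h \<omega>))} \<subseteq> (\<Union>N. G N)"
  proof
    fix \<omega> assume \<omega>: "\<omega> \<in> {\<omega> \<in> space M. c \<le> (\<Sum>j\<in>J. of_bool (S j \<omega> < h \<omega>))}"
    obtain N where "(\<Sum>j\<in>J. of_bool (S j \<omega> < h \<omega>)) \<le> (\<Sum>j\<in>J. of_bool (S j \<omega> \<le> h \<omega> - 1 / Suc N) :: real)"
      using eventually_happens[OF eventually_count_less_le[OF J, of "\<lambda>j. S j \<omega>" "h \<omega>"]] by auto
    with \<omega> have "\<omega> \<in> G N" by (auto simp: G_def)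
    then show "\<omega> \<in> (\<Union>N. G N)" by blast
  qed
  moreover have "measure M (\<Union>N. G N) \<le> \<delta>"
    using finite_Lim_measure_incseq[OF G_sets \<open>incseq G\<close>]
    by (rule LIMSEQ_le_const2) (use bound in \<open>auto simp: G_def\<close>)
  moreover have "(\<Union>N. G N) \<in> sets M"
    using G_sets by auto
  ultimately show ?thesis
    by (meson finite_measure_mono order_trans)
qed

lemma (in prob_space) prob_count_ge_le:
  fixes C P :: "'a \<Rightarrow> real"
  assumes C[measurable]: "C \<in> borel_measurable M" and P[measurable]: "P \<in> borel_measurable M"
    and conc: "1 - \<delta> \<le> prob {\<omega> \<in> space M. \<bar>C \<omega> / m - P \<omega>\<bar> \<le> \<epsilon>}"
    and P_lt: "AE \<omega> in M. P \<omega> < L" and c: "m * (L + \<epsilon>) \<le> c" and m: "0 < m"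
  shows "prob {\<omega> \<in> space M. c \<le> C \<omega>} \<le> \<delta>"
proof -
  define E where "E = {\<omega> \<in> space M. \<bar>C \<omega> / m - P \<omega>\<bar> \<le> \<epsilon>}"
  have E[measurable]: "E \<in> events" unfolding E_def by measurable
  have "AE \<omega> in M. \<omega> \<in> {\<omega> \<in> space M. c \<le> C \<omega>} \<longrightarrow> \<omega> \<in> space M - E"
    using P_lt
  proof eventually_elim
    case (elim \<omega>)
    have "L + \<epsilon> \<le> c / m" using c m by (simp add: pos_le_divide_eq mult.commute)
    moreover have "c / m \<le> C \<omega> / m" if "c \<le> C \<omega>" using that m by (simp add: divide_right_mono)
    ultimately show ?case using elim by (auto simp: E_def)
  qed
  then have "prob {\<omega> \<in> space M. c \<le> C \<omega>} \<le> prob (space M - E)"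
    by (rule finite_measure_mono_AE) auto
  also have "\<dots> \<le> \<delta>"
    using conc by (simp add: prob_compl E_def[symmetric])
  finally show ?thesis .
qed

lemma (in finite_measure) measure_rank_less_ge:
  fixes S :: "nat \<Rightarrow> 'a \<Rightarrow> real" and c :: real
  assumes I: "finite I" "i \<in> I" and S: "\<And>j. j \<in> I \<Longrightarrow> S j \<in> borel_measurable M"
    and h: "h \<in> borel_measurable M"
  shows "measure M {\<omega> \<in> space M. S i \<omega> \<le> h \<omega>}
      - measure M {\<omega> \<in> space M. c \<le> (\<Sum>j\<in>I. of_bool (S j \<omega> < h \<omega>))}
    \<le> measure M {\<omega> \<in> space M. (\<Sum>j\<in>I - {i}. of_bool (S j \<omega> < S i \<omega>)) < c}"
proof -
  define R where "R = {\<omega> \<in> space M. (\<Sum>j\<in>I - {i}. of_bool (S j \<omega> < S i \<omega>)) < c}"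
  define B where "B = {\<omega> \<in> space M. c \<le> (\<Sum>j\<in>I. of_bool (S j \<omega> < h \<omega>))}"
  have [measurable]: "S i \<in> borel_measurable M" using S I by blast
  have "R \<in> sets M"
    using borel_measurable_count_less[of "I - {i}" S M "S i"] S unfolding R_def by measurable
  moreover have "B \<in> sets M"
    using borel_measurable_count_less[OF S h] unfolding B_def by measurable
  moreover have "{\<omega> \<in> space M. S i \<omega> \<le> h \<omega>} \<subseteq> R \<union> B"
  proof
    fix \<omega> assume \<omega>: "\<omega> \<in> {\<omega> \<in> space M. S i \<omega> \<le> h \<omega>}"
    then have "(\<Sum>j\<in>I - {i}. of_bool (S j \<omega> < S i \<omega>)) \<le> (\<Sum>j\<in>I. of_bool (S j \<omega> < h \<omega>) :: real)"
      using I by (intro order_trans[OF sum_mono sum_mono2]) auto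
    with \<omega> show "\<omega> \<in> R \<union> B" by (auto simp: R_def B_def)
  qed
  ultimately have "measure M {\<omega> \<in> space M. S i \<omega> \<le> h \<omega>} \<le> measure M R + measure M B"
    by (meson finite_measure_mono measure_Un_le order_trans sets.Un)
  then show ?thesis by (simp add: R_def B_def)
qed

section \<open>Conditioning on independent training data\<close>

lemma (in prob_space) prob_Pair_eq_measure_distr:
  assumes "Z \<in> measurable M N" and "Q \<in> sets (T \<Otimes>\<^sub>M N)"
  shows "prob {\<omega> \<in> space M. (d, Z \<omega>) \<in> Q} = measure (distr M N Z) (Pair d -` Q)"
  using assms by (subst measure_distr) (auto intro: sets_Pair1 intro!: arg_cong[where f=prob])

lemma (in prob_space) borel_measurable_prob_Pair:
  assumes Z: "Z \<in> measurable M N" and Q: "Q \<in> sets (T \<Otimes>\<^sub>M N)"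
  shows "(\<lambda>d. prob {\<omega> \<in> space M. (d, Z \<omega>) \<in> Q}) \<in> borel_measurable T"
proof -
  interpret Z: prob_space "distr M N Z"
    using Z by (rule prob_space_distr)
  have "Q \<in> sets (T \<Otimes>\<^sub>M distr M N Z)"
    using Q by (simp add: sets_pair_measure_cong[OF refl sets_distr])
  then have "(\<lambda>d. emeasure (distr M N Z) (Pair d -` Q)) \<in> borel_measurable T"
    by (rule Z.measurable_emeasure_Pair)
  then have "(\<lambda>d. measure (distr M N Z) (Pair d -` Q)) \<in> borel_measurable T"
    unfolding measure_def by measurable
  then show ?thesis
    by (simp add: prob_Pair_eq_measure_distr[OF Z Q])
qed

lemma (in prob_space) indep_set_mono:
  "indep_set A B \<Longrightarrow> A' \<subseteq> A \<Longrightarrow> B' \<subseteq> B \<Longrightarrow> indep_set A' B'"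
  unfolding indep_set_def by (rule indep_sets_mono_sets) (auto split: bool.split)

lemma sets_vimage_algebra_comp_subset:
  assumes g: "g \<in> measurable N K" and f: "f \<in> X \<rightarrow> space N"
  shows "sets (vimage_algebra X (\<lambda>x. g (f x)) K) \<subseteq> sets (vimage_algebra X f N)"
proof -
  have "sets (vimage_algebra (space N) g K) \<subseteq> sets N"
    using g by (intro sets_image_in_sets') (auto intro: measurable_sets)
  then have "sets (vimage_algebra X f (vimage_algebra (space N) g K)) \<subseteq> sets (vimage_algebra X f N)"
    by (rule mono_vimage_algebra)
  then show ?thesis
    using f g by (simp add: vimage_algebra_vimage_algebra_eq measurable_def)
qed

lemma (in prob_space) pair_measure_distr_indep_set:
  assumes D[measurable]: "D \<in> measurable M T" and Z[measurable]: "Z \<in> measurable M N"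
    and indep: "indep_set (sets (vimage_algebra (space M) D T)) (sets (vimage_algebra (space M) Z N))"
  shows "distr M T D \<Otimes>\<^sub>M distr M N Z = distr M (T \<Otimes>\<^sub>M N) (\<lambda>\<omega>. (D \<omega>, Z \<omega>))"
proof (rule pair_measure_eqI)
  interpret PD: prob_space "distr M T D" by (rule prob_space_distr) simp
  interpret PZ: prob_space "distr M N Z" by (rule prob_space_distr) simp
  show "sigma_finite_measure (distr M T D)" "sigma_finite_measure (distr M N Z)" ..
  fix A B assume A: "A \<in> sets (distr M T D)" and B: "B \<in> sets (distr M N Z)"
  have "(\<lambda>\<omega>. (D \<omega>, Z \<omega>)) -` (A \<times> B) \<inter> space M = (D -` A \<inter> space M) \<inter> (Z -` B \<inter> space M)"
    by auto
  moreover have "prob ((D -` A \<inter> space M) \<inter> (Z -` B \<inter> space M)) = prob (D -` A \<inter> space M) * prob (Z -` B \<inter> space M)"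
    using A B by (intro indep_setD[OF indep] in_vimage_algebra) auto
  ultimately show "emeasure (distr M T D) A * emeasure (distr M N Z) B
      = emeasure (distr M (T \<Otimes>\<^sub>M N) (\<lambda>\<omega>. (D \<omega>, Z \<omega>))) (A \<times> B)"
    using A B by (simp add: emeasure_distr emeasure_eq_measure ennreal_mult)
qed simp

lemma (in prob_space) integral_indep_freeze:
  fixes h :: "'d \<times> 'z \<Rightarrow> real"
  assumes D[measurable]: "D \<in> measurable M T" and Z[measurable]: "Z \<in> measurable M N"
    and indep: "indep_set (sets (vimage_algebra (space M) D T)) (sets (vimage_algebra (space M) Z N))"
    and h[measurable]: "h \<in> borel_measurable (T \<Otimes>\<^sub>M N)" and int: "integrable M (\<lambda>\<omega>. h (D \<omega>, Z \<omega>))"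
  shows "(\<integral>\<omega>. h (D \<omega>, Z \<omega>) \<partial>M) = (\<integral>\<omega>. (\<integral>z. h (D \<omega>, z) \<partial>distr M N Z) \<partial>M)"
proof -
  let ?PD = "distr M T D" and ?PZ = "distr M N Z"
  interpret PD: prob_space ?PD by (rule prob_space_distr) simp
  interpret PZ: prob_space ?PZ by (rule prob_space_distr) simp
  interpret PDZ: pair_prob_space ?PD ?PZ ..
  note prod = pair_measure_distr_indep_set[OF D Z indep]
  have h_int: "integrable (?PD \<Otimes>\<^sub>M ?PZ) h"
    unfolding prod using int by (simp add: integrable_distr_eq)
  have inner: "(\<lambda>d. \<integral>z. h (d, z) \<partial>?PZ) \<in> borel_measurable T"
    using h by (intro PZ.borel_measurable_lebesgue_integral)
      (simp add: measurable_cong_sets[OF sets_pair_measure_cong[OF refl sets_distr] refl])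
  have "(\<integral>\<omega>. h (D \<omega>, Z \<omega>) \<partial>M) = (\<integral>p. h p \<partial>distr M (T \<Otimes>\<^sub>M N) (\<lambda>\<omega>. (D \<omega>, Z \<omega>)))"
    by (rule integral_distr[symmetric]) auto
  also have "\<dots> = (\<integral>d. (\<integral>z. h (d, z) \<partial>?PZ) \<partial>?PD)"
    unfolding prod[symmetric] by (rule PDZ.integral_fst'[OF h_int, symmetric])
  also have "\<dots> = (\<integral>\<omega>. (\<integral>z. h (D \<omega>, z) \<partial>?PZ) \<partial>M)"
    by (rule integral_distr) (use inner in auto)
  finally show ?thesis .
qed

lemma (in prob_space) real_cond_exp_indicator_indep:
  assumes D[measurable]: "D \<in> measurable M T" and Z[measurable]: "Z \<in> measurable M N"
    and indep: "indep_set (sets (vimage_algebra (space M) D T)) (sets (vimage_algebra (space M) Z N))"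
    and Q[measurable]: "Q \<in> sets (T \<Otimes>\<^sub>M N)"
  shows "AE \<omega> in M. real_cond_exp M (vimage_algebra (space M) D T) (indicator {\<omega> \<in> space M. (D \<omega>, Z \<omega>) \<in> Q}) \<omega>
    = prob {\<omega>' \<in> space M. (D \<omega>, Z \<omega>') \<in> Q}"
proof -
  let ?F = "vimage_algebra (space M) D T"
  have "subalgebra M ?F"
    using D by (auto simp: subalgebra_def sets_vimage_algebra2 measurable_def)
  then interpret F: finite_measure_subalgebra M ?F
    by unfold_locales
  define g where "g d = prob {\<omega>' \<in> space M. (d, Z \<omega>') \<in> Q}" for d
  have g[measurable]: "g \<in> borel_measurable T"
    unfolding g_def using Z Q by (rule borel_measurable_prob_Pair)
  show ?thesis
    unfolding g_def[symmetric]
  proof (rule F.real_cond_exp_charact)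
    show "integrable M (indicator {\<omega> \<in> space M. (D \<omega>, Z \<omega>) \<in> Q} :: _ \<Rightarrow> real)"
      by (intro integrable_real_indicator) (auto simp: emeasure_eq_measure)
    show "integrable M (\<lambda>\<omega>. g (D \<omega>))"
      by (rule integrable_const_bound[where B=1]) (auto simp: g_def)
    show "(\<lambda>\<omega>. g (D \<omega>)) \<in> borel_measurable ?F"
      using D by (intro measurable_compose[OF _ g] measurable_vimage_algebra1) (auto simp: measurable_def)
    fix A assume "A \<in> sets ?F"
    then obtain B where B[measurable]: "B \<in> sets T" and A: "A = D -` B \<inter> space M"
      using D by (auto simp: sets_vimage_algebra2 measurable_def)
    define h :: "_ \<Rightarrow> real" where "h p = indicator B (fst p) * indicator Q p" for p
    have "(\<integral>\<omega>\<in>A. indicator {\<omega> \<in> space M. (D \<omega>, Z \<omega>) \<in> Q} \<omega> \<partial>M) = (\<integral>\<omega>. h (D \<omega>, Z \<omega>) \<partial>M)"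
      unfolding set_lebesgue_integral_def
      by (rule Bochner_Integration.integral_cong) (auto simp: A h_def indicator_def)
    also have "\<dots> = (\<integral>\<omega>. (\<integral>z. h (D \<omega>, z) \<partial>distr M N Z) \<partial>M)"
      by (rule integral_indep_freeze[OF D Z indep])
        (auto simp: h_def indicator_def intro!: integrable_const_bound[where B=1])
    also have "\<dots> = (\<integral>\<omega>. indicator B (D \<omega>) * g (D \<omega>) \<partial>M)"
      using prob_Pair_eq_measure_distr[OF Z Q] by (simp add: h_def g_def indicator_vimage[symmetric])
    also have "\<dots> = (\<integral>\<omega>\<in>A. g (D \<omega>) \<partial>M)"
      unfolding set_lebesgue_integral_def
      by (rule Bochner_Integration.integral_cong) (auto simp: A indicator_def)
    finally show "(\<integral>\<omega>\<in>A. indicator {\<omega> \<in> space M. (D \<omega>, Z \<omega>) \<in> Q} \<omega> \<partial>M) = (\<integral>\<omega>\<in>A. g (D \<omega>) \<partial>M)" .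
  qed
qed

lemma (in prob_space) cdf_distr:
  assumes "f \<in> borel_measurable M"
  shows "cdf (distr M borel f) t = prob {\<omega> \<in> space M. f \<omega> \<le> t}"
  using assms by (simp add: cdf_def measure_distr vimage_def Int_def conj_commute)

lemma (in prob_space)
  fixes s :: "'d \<Rightarrow> 'z \<Rightarrow> real"
  assumes D[measurable]: "D \<in> measurable M T" and Z[measurable]: "Z \<in> measurable M N"
    and indep: "indep_set (sets (vimage_algebra (space M) D T)) (sets (vimage_algebra (space M) Z N))"
    and s[measurable]: "(\<lambda>(d, z). s d z) \<in> borel_measurable (T \<Otimes>\<^sub>M N)"
  shows real_distribution_frozen_score:
      "d \<in> space T \<Longrightarrow> real_distribution (distr M borel (\<lambda>\<omega>. s d (Z \<omega>)))"
    and borel_measurable_cdf_frozen_score: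
      "(\<lambda>d. cdf (distr M borel (\<lambda>\<omega>. s d (Z \<omega>))) t) \<in> borel_measurable T"
    and real_cond_exp_score_eq_cdf: "q \<in> borel_measurable T \<Longrightarrow>
      AE \<omega> in M. real_cond_exp M (vimage_algebra (space M) D T)
        (indicator {\<omega> \<in> space M. s (D \<omega>) (Z \<omega>) \<le> q (D \<omega>)}) \<omega>
      = cdf (distr M borel (\<lambda>\<omega>'. s (D \<omega>) (Z \<omega>'))) (q (D \<omega>))"
proof -
  have score[measurable]: "(\<lambda>\<omega>. s d (Z \<omega>)) \<in> borel_measurable M" if "d \<in> space T" for d
  proof -
    have [measurable]: "s d \<in> borel_measurable N"
      using measurable_Pair2[OF s that] by simp
    show ?thesis by measurable
  qed
  define Q where "Q g = {p \<in> space (T \<Otimes>\<^sub>M N). s (fst p) (snd p) \<le> g (fst p)}" for g :: "'d \<Rightarrow> real"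
  have Q: "Q g \<in> sets (T \<Otimes>\<^sub>M N)" if [measurable]: "g \<in> borel_measurable T" for g
    using s unfolding Q_def by (simp add: case_prod_beta') measurable
  have cdf_score: "cdf (distr M borel (\<lambda>\<omega>. s d (Z \<omega>))) (g d) = prob {\<omega> \<in> space M. (d, Z \<omega>) \<in> Q g}"
    if "d \<in> space T" for d g
    using that measurable_space[OF Z] by (auto simp: cdf_distr space_pair_measure Q_def intro!: arg_cong[where f=prob])
  show "d \<in> space T \<Longrightarrow> real_distribution (distr M borel (\<lambda>\<omega>. s d (Z \<omega>)))"
    by simp
  have "prob {\<omega> \<in> space M. (d, Z \<omega>) \<in> Q (\<lambda>_. t)} = cdf (distr M borel (\<lambda>\<omega>. s d (Z \<omega>))) t"
    if "d \<in> space T" for d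
    using cdf_score[OF that, of "\<lambda>_. t"] by simp
  with borel_measurable_prob_Pair[OF Z Q[OF borel_measurable_const]]
  show "(\<lambda>d. cdf (distr M borel (\<lambda>\<omega>. s d (Z \<omega>))) t) \<in> borel_measurable T"
    by (rule measurable_cong[THEN iffD1, rotated])
  assume q[measurable]: "q \<in> borel_measurable T"
  have event_eq: "{\<omega> \<in> space M. s (D \<omega>) (Z \<omega>) \<le> q (D \<omega>)}
      = {\<omega> \<in> space M. (D \<omega>, Z \<omega>) \<in> Q q}"
    using measurable_space[OF D] measurable_space[OF Z] by (auto simp: space_pair_measure Q_def)
  show "AE \<omega> in M. real_cond_exp M (vimage_algebra (space M) D T)
        (indicator {\<omega> \<in> space M. s (D \<omega>) (Z \<omega>) \<le> q (D \<omega>)}) \<omega>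
      = cdf (distr M borel (\<lambda>\<omega>'. s (D \<omega>) (Z \<omega>'))) (q (D \<omega>))"
    using real_cond_exp_indicator_indep[OF D Z indep Q[OF q]] AE_space
    by eventually_elim (simp add: event_eq cdf_score measurable_space[OF D])
qed

lemma (in prob_space) indep_set_train_data:
  assumes indep: "indep_set (sets (vimage_algebra (space M) (\<lambda>\<omega>. \<lambda>i\<in>{1..n}. (X i \<omega>, Y i \<omega>))
      (PiM {1..n} (\<lambda>_. MX \<Otimes>\<^sub>M MY)))) B"
    and X: "\<And>i. i \<in> {1..n} \<Longrightarrow> X i \<in> measurable M MX"
    and Y: "\<And>i. i \<in> {1..n} \<Longrightarrow> Y i \<in> measurable M MY"
    and "ntrain \<le> n"
  shows "indep_set (sets (vimage_algebra (space M) (train_data X Y ntrain)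
      (PiM {1..ntrain} (\<lambda>_. MX \<Otimes>\<^sub>M MY)))) B"
proof (rule indep_set_mono[OF indep _ order_refl])
  let ?data = "\<lambda>\<omega>. \<lambda>i\<in>{1..n}. (X i \<omega>, Y i \<omega>)" and ?restr = "\<lambda>f. restrict f {1..ntrain}"
  have data: "?data \<in> measurable M (PiM {1..n} (\<lambda>_. MX \<Otimes>\<^sub>M MY))"
    using X Y by (intro measurable_restrict) auto
  have restr: "?restr \<in> measurable (PiM {1..n} (\<lambda>_. MX \<Otimes>\<^sub>M MY)) (PiM {1..ntrain} (\<lambda>_. MX \<Otimes>\<^sub>M MY))"
    using \<open>ntrain \<le> n\<close> by (intro measurable_restrict_subset) auto
  have "sets (vimage_algebra (space M) (\<lambda>\<omega>. ?restr (?data \<omega>)) (PiM {1..ntrain} (\<lambda>_. MX \<Otimes>\<^sub>M MY)))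
      \<subseteq> sets (vimage_algebra (space M) ?data (PiM {1..n} (\<lambda>_. MX \<Otimes>\<^sub>M MY)))"
    by (intro sets_vimage_algebra_comp_subset[OF restr] Pi_I measurable_space[OF data])
  moreover have "(\<lambda>\<omega>. ?restr (?data \<omega>)) = train_data X Y ntrain"
    using \<open>ntrain \<le> n\<close> by (simp add: train_data_def fun_eq_iff)
  ultimately show "sets (vimage_algebra (space M) (train_data X Y ntrain) (PiM {1..ntrain} (\<lambda>_. MX \<Otimes>\<^sub>M MY)))
      \<subseteq> sets (vimage_algebra (space M) ?data (PiM {1..n} (\<lambda>_. MX \<Otimes>\<^sub>M MY)))"
    by simp
qed

section \<open>Coverage of the leave-one-out quantile\<close>

text \<open>\<open>P q\<close> abstracts \<open>P_q_train\<close>, and \<open>\<mu> d\<close> is the law of the test score when the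
  training data are frozen at \<open>d\<close>.\<close>

locale conditional_score_law = prob_space M for M :: "'a measure" +
  fixes T :: "'d measure" and D :: "'a \<Rightarrow> 'd"
    and \<mu> :: "'d \<Rightarrow> real measure" and P :: "('d \<Rightarrow> real) \<Rightarrow> 'a \<Rightarrow> real"
  assumes measurable_D [measurable]: "D \<in> measurable M T"
    and real_distribution_\<mu>: "d \<in> space T \<Longrightarrow> real_distribution (\<mu> d)"
    and borel_measurable_cdf_\<mu>: "(\<lambda>d. cdf (\<mu> d) t) \<in> borel_measurable T"
    and borel_measurable_P: "q \<in> borel_measurable T \<Longrightarrow> P q \<in> borel_measurable M"
    and AE_P_eq_cdf: "q \<in> borel_measurable T \<Longrightarrow> AE \<omega> in M. P q \<omega> = cdf (\<mu> (D \<omega>)) (q (D \<omega>))"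
begin

lemma
  assumes L: "0 < L" "L < 1"
  shows borel_measurable_quantile: "(\<lambda>d. cdf_quantile (\<mu> d) L) \<in> borel_measurable T"
    and integral_P_quantile_ge: "L \<le> (\<integral>\<omega>. P (\<lambda>d. cdf_quantile (\<mu> d) L) \<omega> \<partial>M)"
    and AE_P_below_quantile_less: "0 < r \<Longrightarrow> AE \<omega> in M. P (\<lambda>d. cdf_quantile (\<mu> d) L - r) \<omega> < L"
proof -
  let ?q = "\<lambda>d. cdf_quantile (\<mu> d) L"
  show q[measurable]: "?q \<in> borel_measurable T"
    using real_distribution_\<mu> borel_measurable_cdf_\<mu> L by (rule borel_measurable_cdf_quantile)
  have q_le_iff: "?q d \<le> t \<longleftrightarrow> L \<le> cdf (\<mu> d) t" if "d \<in> space T" for d t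
    using real_distribution.cdf_quantile_le_iff[OF real_distribution_\<mu>[OF that] L] .
  have AE_D_in_space: "AE \<omega> in M. D \<omega> \<in> space T"
    using measurable_space[OF measurable_D] by simp
  show "L \<le> (\<integral>\<omega>. P ?q \<omega> \<partial>M)"
  proof (rule integral_ge_const)
    show "integrable M (P ?q)"
      using AE_P_eq_cdf[OF q] AE_D_in_space
    proof (intro integrable_const_bound[where B=1] borel_measurable_P q, eventually_elim)
      case (elim \<omega>)
      then show ?case
        using finite_borel_measure.cdf_nonneg[OF real_distribution.finite_borel_measure_M]
          real_distribution.cdf_bounded_prob real_distribution_\<mu> by simp
    qed
    show "AE \<omega> in M. L \<le> P ?q \<omega>"
      using AE_P_eq_cdf[OF q] AE_D_in_space by eventually_elim (simp add: q_le_iff[symmetric])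
  qed
  assume "0 < r"
  have q': "(\<lambda>d. ?q d - r) \<in> borel_measurable T" by measurable
  show "AE \<omega> in M. P (\<lambda>d. ?q d - r) \<omega> < L"
    using AE_P_eq_cdf[OF q'] AE_D_in_space
  proof eventually_elim
    case (elim \<omega>)
    have "\<not> ?q (D \<omega>) \<le> ?q (D \<omega>) - r" using \<open>0 < r\<close> by simp
    then show ?case using elim q_le_iff[of "D \<omega>" "?q (D \<omega>) - r"] by simp
  qed
qed

lemma prob_many_below_quantile_le:
  fixes S :: "nat \<Rightarrow> 'a \<Rightarrow> real" and c L :: real
  assumes I: "finite I" "I \<noteq> {}" and S: "\<And>j. j \<in> I \<Longrightarrow> S j \<in> borel_measurable M"
    and concentration: "\<And>q. q \<in> borel_measurable T \<Longrightarrow>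
      1 - \<delta> \<le> prob {\<omega> \<in> space M. \<bar>(\<Sum>j\<in>I. of_bool (S j \<omega> \<le> q (D \<omega>))) / card I - P q \<omega>\<bar> \<le> \<epsilon>}"
    and L: "0 < L" "L < 1" and c: "card I * (L + \<epsilon>) \<le> c"
  shows "prob {\<omega> \<in> space M. c \<le> (\<Sum>j\<in>I. of_bool (S j \<omega> < cdf_quantile (\<mu> (D \<omega>)) L))} \<le> \<delta>"
proof (rule measure_count_less_le[OF I(1) S])
  let ?q = "\<lambda>d. cdf_quantile (\<mu> d) L"
  have [measurable]: "?q \<in> borel_measurable T"
    using L by (rule borel_measurable_quantile)
  show "(\<lambda>\<omega>. ?q (D \<omega>)) \<in> borel_measurable M" by measurable
  fix N :: nat
  have q': "(\<lambda>d. ?q d - 1 / Suc N) \<in> borel_measurable T" by measurable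
  show "prob {\<omega> \<in> space M. c \<le> (\<Sum>j\<in>I. of_bool (S j \<omega> \<le> ?q (D \<omega>) - 1 / Suc N))} \<le> \<delta>"
  proof (rule prob_count_ge_le)
    show "(\<lambda>\<omega>. \<Sum>j\<in>I. of_bool (S j \<omega> \<le> ?q (D \<omega>) - 1 / Suc N) :: real) \<in> borel_measurable M"
      using S by (rule borel_measurable_count_le) measurable
    show "1 - \<delta> \<le> prob {\<omega> \<in> space M.
        \<bar>(\<Sum>j\<in>I. of_bool (S j \<omega> \<le> ?q (D \<omega>) - 1 / Suc N)) / card I - P (\<lambda>d. ?q d - 1 / Suc N) \<omega>\<bar> \<le> \<epsilon>}"
      using concentration[OF q'] by simp
    show "AE \<omega> in M. P (\<lambda>d. ?q d - 1 / Suc N) \<omega> < L"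
      using L by (rule AE_P_below_quantile_less) simp
  qed (use I c borel_measurable_P[OF q'] in auto)
qed (use S in auto)

lemma cal_quantile_marginal_coverage:
  fixes s :: "'d \<Rightarrow> 'z \<Rightarrow> real" and W :: "nat \<Rightarrow> 'a \<Rightarrow> 'z"
  assumes I: "finite I" "i \<in> I" "2 \<le> card I"
    and S: "\<And>j. j \<in> I \<Longrightarrow> (\<lambda>\<omega>. s (D \<omega>) (W j \<omega>)) \<in> borel_measurable M"
    and marginal: "\<And>q. q \<in> borel_measurable T \<Longrightarrow>
      \<bar>prob {\<omega> \<in> space M. s (D \<omega>) (W i \<omega>) \<le> q (D \<omega>)} - (\<integral>\<omega>. P q \<omega> \<partial>M)\<bar> \<le> \<epsilon>\<^sub>i"
    and concentration: "\<And>q. q \<in> borel_measurable T \<Longrightarrow>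
      1 - \<delta> \<le> prob {\<omega> \<in> space M.
        \<bar>(\<Sum>j\<in>I. of_bool (s (D \<omega>) (W j \<omega>) \<le> q (D \<omega>))) / card I - P q \<omega>\<bar> \<le> \<epsilon>}"
    and \<alpha>: "0 \<le> \<alpha>" "\<alpha> < 1" and \<epsilon>: "0 < \<epsilon>" and \<delta>: "0 \<le> \<delta>"
  shows "1 - \<alpha> - \<epsilon>\<^sub>i - \<epsilon> - \<delta> - 1 / card I
    \<le> prob {\<omega> \<in> space M. s (D \<omega>) (W i \<omega>) \<le> cal_quantile (s (D \<omega>)) I i (\<lambda>j. W j \<omega>) (1 - \<alpha>)}"
proof -
  define S where "S = (\<lambda>j \<omega>. s (D \<omega>) (W j \<omega>))"
  have S_meas: "\<And>j. j \<in> I \<Longrightarrow> S j \<in> borel_measurable M"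
    using S by (simp add: S_def)
  define m where "m = real (card I)"
  define L where "L = 1 - \<alpha> - \<epsilon> - 1 / m"
  define c where "c = (1 - \<alpha>) * (m - 1)"
  have m: "0 < m" using I by (auto simp: m_def card_gt_0_iff)
  have "0 \<le> \<epsilon>\<^sub>i" using marginal[of "\<lambda>_. 0"] by simp
  have "L - \<epsilon>\<^sub>i - \<delta> \<le> prob {\<omega> \<in> space M. (\<Sum>j\<in>I - {i}. of_bool (S j \<omega> < S i \<omega>)) < c}"
  proof (cases "0 < L")
    case False
    then show ?thesis using \<open>0 \<le> \<epsilon>\<^sub>i\<close> \<delta> measure_nonneg[of M] by (meson diff_le_0_iff_le order_trans not_le)
  next
    case True
    have "0 < 1 / m" using m by simp
    then have "L < 1" using \<alpha> \<epsilon> unfolding L_def by linarith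
    \<comment> \<open>Conditionally on the training data, a test score lies below \<open>q\<close> with probability
      at least \<open>L\<close>, and strictly below it with probability at most \<open>L\<close>.\<close>
    define q where "q = (\<lambda>d. cdf_quantile (\<mu> d) L)"
    have q[measurable]: "q \<in> borel_measurable T"
      unfolding q_def using True \<open>L < 1\<close> by (rule borel_measurable_quantile)
    have "L - \<epsilon>\<^sub>i \<le> prob {\<omega> \<in> space M. S i \<omega> \<le> q (D \<omega>)}"
      using marginal[OF q] integral_P_quantile_ge[OF True \<open>L < 1\<close>] by (simp add: S_def q_def)
    moreover have "prob {\<omega> \<in> space M. c \<le> (\<Sum>j\<in>I. of_bool (S j \<omega> < q (D \<omega>)))} \<le> \<delta>"
      unfolding q_def
    proof (rule prob_many_below_quantile_le[OF I(1) _ S_meas _ True \<open>L < 1\<close>])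
      show "card I * (L + \<epsilon>) \<le> c"
        using \<alpha> m by (simp add: L_def c_def m_def algebra_simps)
    qed (use I concentration in \<open>auto simp: S_def\<close>)
    moreover have "prob {\<omega> \<in> space M. S i \<omega> \<le> q (D \<omega>)}
        - prob {\<omega> \<in> space M. c \<le> (\<Sum>j\<in>I. of_bool (S j \<omega> < q (D \<omega>)))}
      \<le> prob {\<omega> \<in> space M. (\<Sum>j\<in>I - {i}. of_bool (S j \<omega> < S i \<omega>)) < c}"
      by (rule measure_rank_less_ge[OF I(1,2) S_meas]) measurable
    ultimately show ?thesis by linarith
  qed
  also have "\<dots> = prob {\<omega> \<in> space M. s (D \<omega>) (W i \<omega>) \<le> cal_quantile (s (D \<omega>)) I i (\<lambda>j. W j \<omega>) (1 - \<alpha>)}"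
    using le_cal_quantile_iff[OF I, where f="s (D \<omega>)" and Z="\<lambda>j. W j \<omega>" for \<omega>] \<alpha>
    by (simp add: S_def c_def m_def)
  finally show ?thesis by (simp add: L_def m_def)
qed

end

lemma conditional_score_law_P_q_train:
  fixes M :: "'a measure" and MX :: "'x measure" and MY :: "'y measure" and ntrain :: nat
    and s :: "(nat \<Rightarrow> 'x \<times> 'y) \<Rightarrow> 'x \<times> 'y \<Rightarrow> real"
  defines "TR \<equiv> PiM {1..ntrain} (\<lambda>_. MX \<Otimes>\<^sub>M MY)"
  assumes M: "prob_space M"
    and X: "\<And>i. i \<in> {1..n} \<Longrightarrow> X i \<in> measurable M MX"
    and Y: "\<And>i. i \<in> {1..n} \<Longrightarrow> Y i \<in> measurable M MY" and "ntrain \<le> n"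
    and Xs: "Xs \<in> measurable M MX" and Ys: "Ys \<in> measurable M MY"
    and indep: "prob_space.indep_set M
      (sets (vimage_algebra (space M) (\<lambda>\<omega>. \<lambda>i\<in>{1..n}. (X i \<omega>, Y i \<omega>)) (PiM {1..n} (\<lambda>_. MX \<Otimes>\<^sub>M MY))))
      (sets (vimage_algebra (space M) (\<lambda>\<omega>. (Xs \<omega>, Ys \<omega>)) (MX \<Otimes>\<^sub>M MY)))"
    and s: "(\<lambda>(d, z). s d z) \<in> borel_measurable (TR \<Otimes>\<^sub>M (MX \<Otimes>\<^sub>M MY))"
  shows "conditional_score_law M TR (train_data X Y ntrain)
    (\<lambda>d. distr M borel (\<lambda>\<omega>. s d (Xs \<omega>, Ys \<omega>))) (P_q_train M MX MY X Y Xs Ys ntrain s)"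
proof -
  interpret prob_space M by (rule M)
  have D: "train_data X Y ntrain \<in> measurable M TR"
    unfolding train_data_def TR_def using X Y \<open>ntrain \<le> n\<close> by (intro measurable_restrict) auto
  have Z: "(\<lambda>\<omega>. (Xs \<omega>, Ys \<omega>)) \<in> measurable M (MX \<Otimes>\<^sub>M MY)"
    using Xs Ys by measurable
  have indep_D: "indep_set (sets (vimage_algebra (space M) (train_data X Y ntrain) TR))
      (sets (vimage_algebra (space M) (\<lambda>\<omega>. (Xs \<omega>, Ys \<omega>)) (MX \<Otimes>\<^sub>M MY)))"
    unfolding TR_def using indep X Y \<open>ntrain \<le> n\<close> by (rule indep_set_train_data)
  show ?thesis
  proof (intro conditional_score_law.intro conditional_score_law_axioms.intro M D)
    show "real_distribution (distr M borel (\<lambda>\<omega>. s d (Xs \<omega>, Ys \<omega>)))" if "d \<in> space TR" for d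
      using that by (rule real_distribution_frozen_score[OF D Z indep_D s])
    show "(\<lambda>d. cdf (distr M borel (\<lambda>\<omega>. s d (Xs \<omega>, Ys \<omega>))) t) \<in> borel_measurable TR" for t
      by (rule borel_measurable_cdf_frozen_score[OF D Z indep_D s])
    show "P_q_train M MX MY X Y Xs Ys ntrain s q \<in> borel_measurable M" for q
      unfolding P_q_train_def by (rule borel_measurable_cond_exp2)
    show "AE \<omega> in M. P_q_train M MX MY X Y Xs Ys ntrain s q \<omega>
        = cdf (distr M borel (\<lambda>\<omega>'. s (train_data X Y ntrain \<omega>) (Xs \<omega>', Ys \<omega>'))) (q (train_data X Y ntrain \<omega>))"
      if "q \<in> borel_measurable TR" for q
      unfolding P_q_train_def TR_def[symmetric]
      using that by (rule real_cond_exp_score_eq_cdf[OF D Z indep_D s])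
  qed
qed

theorem theorem4p1:
  fixes M :: "'a measure" and MX :: "'x measure" and MY :: "'y measure"
    and X :: "nat \<Rightarrow> 'a \<Rightarrow> 'x" and Y :: "nat \<Rightarrow> 'a \<Rightarrow> 'y"
    and Xs :: "'a \<Rightarrow> 'x" and Ys :: "'a \<Rightarrow> 'y"
    and ntrain ntest :: nat
    and s :: "(nat \<Rightarrow> 'x \<times> 'y) \<Rightarrow> 'x \<times> 'y \<Rightarrow> real"
    and \<alpha> \<epsilon> \<delta> :: real and \<epsilon>i :: "nat \<Rightarrow> real"
  defines "n \<equiv> ntrain + ntest"
    and "Itest \<equiv> {ntrain + 1..ntrain + ntest}"
    and "TR \<equiv> PiM {1..ntrain} (\<lambda>_. MX \<Otimes>\<^sub>M MY)"
  assumes M: "prob_space M"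
    and X_meas: "\<And>i. i \<in> {1..n} \<Longrightarrow> X i \<in> measurable M MX"
    and Y_meas: "\<And>i. i \<in> {1..n} \<Longrightarrow> Y i \<in> measurable M MY"
    and Xs_meas: "Xs \<in> measurable M MX" and Ys_meas: "Ys \<in> measurable M MY"
    and indep: "prob_space.indep_set M
                  (sets (vimage_algebra (space M) (\<lambda>\<omega>. (\<lambda>i\<in>{1..n}. (X i \<omega>, Y i \<omega>)))
                           (PiM {1..n} (\<lambda>_. MX \<Otimes>\<^sub>M MY))))
                  (sets (vimage_algebra (space M) (\<lambda>\<omega>. (Xs \<omega>, Ys \<omega>)) (MX \<Otimes>\<^sub>M MY)))"
    and ident: "\<And>i. i \<in> {1..n} \<Longrightarrow>
                  distr M (MX \<Otimes>\<^sub>M MY) (\<lambda>\<omega>. (X i \<omega>, Y i \<omega>)) = distr M (MX \<Otimes>\<^sub>M MY) (\<lambda>\<omega>. (Xs \<omega>, Ys \<omega>))"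
    and ntrain_pos: "ntrain > 0" and ntest_ge: "ntest \<ge> 2"
    and s_meas: "(\<lambda>(d, z). s d z) \<in> borel_measurable (TR \<Otimes>\<^sub>M (MX \<Otimes>\<^sub>M MY))"
    and \<alpha>: "0 < \<alpha>" "\<alpha> < 1"
    and \<epsilon>: "0 < \<epsilon>" "\<epsilon> < 1"
    and \<epsilon>i: "\<And>i. i \<in> Itest \<Longrightarrow> 0 < \<epsilon>i i \<and> \<epsilon>i i < 1"
    and \<delta>: "0 < \<delta>" "\<delta> < 1"
    and hyp1: "\<And>q i. q \<in> borel_measurable TR \<Longrightarrow> i \<in> Itest \<Longrightarrow>
        \<bar>measure M {\<omega> \<in> space M. s (train_data X Y ntrain \<omega>) (X i \<omega>, Y i \<omega>) \<le> q (train_data X Y ntrain \<omega>)}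
          - (\<integral>\<omega>. P_q_train M MX MY X Y Xs Ys ntrain s q \<omega> \<partial>M)\<bar> \<le> \<epsilon>i i"
    and hyp2: "\<And>q. q \<in> borel_measurable TR \<Longrightarrow>
        measure M {\<omega> \<in> space M.
          \<bar>(\<Sum>i\<in>Itest. (of_bool (s (train_data X Y ntrain \<omega>) (X i \<omega>, Y i \<omega>) \<le> q (train_data X Y ntrain \<omega>)) :: real)) / real ntest
            - P_q_train M MX MY X Y Xs Ys ntrain s q \<omega>\<bar> \<le> \<epsilon>} \<ge> 1 - \<delta>"
  shows "(\<forall>i\<in>Itest.
           measure M {\<omega> \<in> space M.
             s (train_data X Y ntrain \<omega>) (X i \<omega>, Y i \<omega>)
               \<le> cal_quantile (s (train_data X Y ntrain \<omega>)) Itest i (\<lambda>j. (X j \<omega>, Y j \<omega>)) (1 - \<alpha>)}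
           \<ge> 1 - \<alpha> - \<epsilon>i i - \<epsilon> - \<delta> - 1 / real ntest) \<and>
         measure M {\<omega> \<in> space M.
           (\<Sum>i\<in>Itest. (of_bool (s (train_data X Y ntrain \<omega>) (X i \<omega>, Y i \<omega>)
               \<le> cal_quantile (s (train_data X Y ntrain \<omega>)) Itest i (\<lambda>j. (X j \<omega>, Y j \<omega>)) (1 - \<alpha>)) :: real))
             / real ntest \<ge> 1 - \<alpha> - \<epsilon> - 1 / real ntest}
         \<ge> 1 - 2 * \<delta>"
proof -
  have Itest: "finite Itest" "card Itest = ntest" "Itest \<subseteq> {1..n}" "ntrain \<le> n"
    by (auto simp: Itest_def n_def)
  interpret conditional_score_law M TR "train_data X Y ntrain"
    "\<lambda>d. distr M borel (\<lambda>\<omega>. s d (Xs \<omega>, Ys \<omega>))" "P_q_train M MX MY X Y Xs Ys ntrain s"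
    unfolding TR_def
    using M X_meas Y_meas \<open>ntrain \<le> n\<close> Xs_meas Ys_meas indep s_meas[unfolded TR_def]
    by (rule conditional_score_law_P_q_train)
  have scores: "(\<lambda>\<omega>. s (train_data X Y ntrain \<omega>) (X j \<omega>, Y j \<omega>)) \<in> borel_measurable M" if "j \<in> Itest" for j
    using measurable_compose[OF measurable_Pair[OF measurable_D measurable_Pair[OF X_meas Y_meas]] s_meas]
      that Itest(3) by auto
  have marginal: "1 - \<alpha> - \<epsilon>i i - \<epsilon> - \<delta> - 1 / card Itest \<le> prob {\<omega> \<in> space M.
      s (train_data X Y ntrain \<omega>) (X i \<omega>, Y i \<omega>)
        \<le> cal_quantile (s (train_data X Y ntrain \<omega>)) Itest i (\<lambda>j. (X j \<omega>, Y j \<omega>)) (1 - \<alpha>)}"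
    if "i \<in> Itest" for i
    by (rule cal_quantile_marginal_coverage[where s=s and W="\<lambda>j \<omega>. (X j \<omega>, Y j \<omega>)"])
      (use that Itest scores ntest_ge \<alpha> \<epsilon> \<delta> hyp1 hyp2 in auto)
  have "1 - \<alpha> - \<epsilon> - 1 / real ntest \<le> (\<Sum>i\<in>Itest. of_bool (s (train_data X Y ntrain \<omega>) (X i \<omega>, Y i \<omega>)
      \<le> cal_quantile (s (train_data X Y ntrain \<omega>)) Itest i (\<lambda>j. (X j \<omega>, Y j \<omega>)) (1 - \<alpha>))) / real ntest" for \<omega>
    using cal_quantile_empirical_coverage[OF Itest(1), where \<alpha>=\<alpha> and f="s (train_data X Y ntrain \<omega>)"
        and Z="\<lambda>j. (X j \<omega>, Y j \<omega>)"] Itest ntest_ge \<alpha> \<epsilon> by simp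
  then show ?thesis
    using marginal \<delta> Itest(2) by (simp add: prob_space)
qed

end
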